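(* Let $s,t\in\mathbb{R}$ with $s\ne0$, $t\neq0$, $s^2+4t>0$, and let $a,\xi\in\mathbb{C}$. Consider the equation $(\mathbf{D}_{s,t}y)(x)=a\,y(\varphi_{s,t}x)$. (All identities below are asserted at points where the involved series converge.) (1) $f(x)=\xi\,\mathrm{Exp}_{s,t}(ax)$ is a solution with $f(0)=\xi$. (2) For $\eta$ with $\mathrm{Exp}_{s,t}(a\eta)$ and $\mathrm{Exp}'_{s,t}(-a\eta)$ convergent, $f(x)=\xi\,\mathrm{Exp}_{s,t}(ax)\,\mathrm{Exp}'_{s,t}(-a\eta)$ is a solution with $f(\eta)=\xi$. (3) If $\eta>0$ and $f(x)=\mathrm{Exp}_{s,t}(ax)\mathrm{Exp}'_{s,t}(-a\eta)$ (a solution with $f(\eta)=1$), then for every function $p$ with $p(qy)=p(y)$ for all $y\ne0$, where $q=\varphi'_{s,t}/\varphi_{s,t}$, the function $g(x)=p(x)f(x)$ is also a solution, and $g(\eta)=p(\eta)$.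
   Context: $\varphi_{s,t}=\frac{s+\sqrt{s^2+4t}}{2}$, $\varphi'_{s,t}=\frac{s-\sqrt{s^2+4t}}{2}$. Generalized Fibonacci polynomials: $\{0\}_{s,t}=0$, $\{1\}_{s,t}=1$, $\{n+2\}_{s,t}=s\{n+1\}_{s,t}+t\{n\}_{s,t}$; Fibotorial $\{n\}_{s,t}!=\prod_{k=1}^n\{k\}_{s,t}$, $\{0\}_{s,t}!=1$. $\mathrm{Exp}_{s,t}(z)=\sum_{n\ge0}\varphi_{s,t}^{\binom n2}z^n/\{n\}_{s,t}!$, $\mathrm{Exp}'_{s,t}(z)=\sum_{n\ge0}\varphi_{s,t}'^{\,\binom n2}z^n/\{n\}_{s,t}!$. The $(s,t)$-derivative: $(\mathbf{D}_{s,t}f)(x)=\frac{f(\varphi_{s,t}x)-f(\varphi'_{s,t}x)}{(\varphi_{s,t}-\varphi'_{s,t})x}$ for $x\ne0$, $(\mathbf{D}_{s,t}f)(0)=f'(0)$. In the paper the $q$-periodic functions are written $G(\log_q(x))$ with $G$ periodic of period one. *)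

theory Defs
  imports "HOL-Analysis.Analysis"
begin

definition phi :: "real \<Rightarrow> real \<Rightarrow> real" where
  "phi s t = (s + sqrt (s\<^sup>2 + 4 * t)) / 2"

definition phi' :: "real \<Rightarrow> real \<Rightarrow> real" where
  "phi' s t = (s - sqrt (s\<^sup>2 + 4 * t)) / 2"

fun fibp :: "real \<Rightarrow> real \<Rightarrow> nat \<Rightarrow> real" where
  "fibp s t 0 = 0"
| "fibp s t (Suc 0) = 1"
| "fibp s t (Suc (Suc n)) = s * fibp s t (Suc n) + t * fibp s t n"

definition fibfact :: "real \<Rightarrow> real \<Rightarrow> nat \<Rightarrow> real" where
  "fibfact s t n = (\<Prod>k = 1..n. fibp s t k)"

definition Exp_term :: "real \<Rightarrow> real \<Rightarrow> complex \<Rightarrow> nat \<Rightarrow> complex" where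
  "Exp_term s t z n = complex_of_real (phi s t ^ (n choose 2)) * z ^ n / complex_of_real (fibfact s t n)"

definition Exp'_term :: "real \<Rightarrow> real \<Rightarrow> complex \<Rightarrow> nat \<Rightarrow> complex" where
  "Exp'_term s t z n = complex_of_real (phi' s t ^ (n choose 2)) * z ^ n / complex_of_real (fibfact s t n)"

definition Exp_st :: "real \<Rightarrow> real \<Rightarrow> complex \<Rightarrow> complex" where
  "Exp_st s t z = (\<Sum>n. Exp_term s t z n)"

definition Exp'_st :: "real \<Rightarrow> real \<Rightarrow> complex \<Rightarrow> complex" where
  "Exp'_st s t z = (\<Sum>n. Exp'_term s t z n)"

definition stD :: "real \<Rightarrow> real \<Rightarrow> (real \<Rightarrow> complex) \<Rightarrow> real \<Rightarrow> complex" where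
  "stD s t f x = (if x = 0 then vector_derivative f (at 0)
     else (f (phi s t * x) - f (phi' s t * x)) / complex_of_real ((phi s t - phi' s t) * x))"

text \<open>y solves (D y)(x) = a y(phi x) at the point x (at x = 0 we also require that
  f'(0) exists, so that (D y)(0) is meaningful).\<close>
definition solves_at :: "real \<Rightarrow> real \<Rightarrow> complex \<Rightarrow> (real \<Rightarrow> complex) \<Rightarrow> real \<Rightarrow> bool" where
  "solves_at s t a y x \<longleftrightarrow> (x = 0 \<longrightarrow> y differentiable (at 0)) \<and> stD s t y x = a * y (phi s t * x)"

end

theory Submission
  imports Defs
begin

(*
  Write E_psi(z) = sum_n psi^(n choose 2) z^n / {n}! for psi = phi, phi', so that Exp = E_phi and
  Exp' = E_phi'. Binet's formula {n} = (phi^n - phi'^n) / (phi - phi') turns the coefficient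
  recurrence {n+1} c_(n+1) = psi^n c_n into the termwise identity
  E_phi(phi z) - E_phi(phi' z) = (phi - phi') z E_phi(phi z), which is the equation D y = a y(phi x)
  for y(x) = Exp(a x); D is linear, and a factor p with p(phi' x) = p(phi x) passes through it.
  The addition rule {i+j} = phi^j {i} + phi'^i {j} makes all coefficients of the Cauchy product of
  Exp(z) and Exp'(-z) vanish except the constant one, so Exp(z) Exp'(-z) = 1, which gives the
  values at eta. The Cauchy product needs absolute convergence: with mu = max |phi| |phi'|, the
  ratio test gives it when |psi| < mu or |z| (phi - phi') < mu, and otherwise the terms stay above
  a positive constant, so the series diverges.
*)

section \<open>Binet's formula\<close>

lemma phi_add_phi': "phi s t + phi' s t = s"
  by (simp add: phi_def phi'_def field_simps)

lemma phi_diff_phi': "phi s t - phi' s t = sqrt (s\<^sup>2 + 4 * t)"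
  by (simp add: phi_def phi'_def field_simps)

lemma phi_mult_phi':
  assumes "s\<^sup>2 + 4 * t \<ge> 0"
  shows "phi s t * phi' s t = - t"
proof -
  have "sqrt (s\<^sup>2 + 4 * t) ^ 2 = s\<^sup>2 + 4 * t"
    using assms by simp
  then show ?thesis
    by (simp add: phi_def phi'_def field_simps power2_eq_square)
qed

lemma phi_gt_phi':
  assumes "s\<^sup>2 + 4 * t > 0"
  shows "phi' s t < phi s t"
  using assms phi_diff_phi'[of s t] real_sqrt_gt_0_iff[of "s\<^sup>2 + 4 * t"] by linarith

lemma phi_nonzero:
  assumes "s\<^sup>2 + 4 * t \<ge> 0" "t \<noteq> 0"
  shows "phi s t \<noteq> 0" "phi' s t \<noteq> 0"
  using phi_mult_phi'[OF assms(1)] assms(2) by auto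

lemma abs_phi_neq_abs_phi':
  assumes "s\<^sup>2 + 4 * t > 0" "s \<noteq> 0"
  shows "\<bar>phi s t\<bar> \<noteq> \<bar>phi' s t\<bar>"
  using phi_gt_phi'[OF assms(1)] phi_add_phi'[of s t] assms(2) by (auto simp: abs_if split: if_splits)

lemma fibp_Binet:
  assumes "s\<^sup>2 + 4 * t > 0"
  shows "fibp s t n = (phi s t ^ n - phi' s t ^ n) / (phi s t - phi' s t)"
proof (induction n rule: induct_nat_012)
  case (ge2 n)
  define p p' where "p = phi s t" and "p' = phi' s t"
  have "fibp s t (Suc (Suc n)) = (p + p') * fibp s t (Suc n) - p * p' * fibp s t n"
    using phi_add_phi'[of s t] phi_mult_phi'[of s t] assms by (simp add: p_def p'_def)
  also have "\<dots> = ((p + p') * (p ^ Suc n - p' ^ Suc n) - p * p' * (p ^ n - p' ^ n)) / (p - p')"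
    unfolding ge2[folded p_def p'_def] by (simp add: right_diff_distrib diff_divide_distrib)
  also have "(p + p') * (p ^ Suc n - p' ^ Suc n) - p * p' * (p ^ n - p' ^ n) = p ^ Suc (Suc n) - p' ^ Suc (Suc n)"
    by (simp add: algebra_simps)
  finally show ?case by (simp add: p_def p'_def)
qed (use phi_gt_phi'[OF assms] in auto)

lemma abs_fibp_mult_phi_diff:
  assumes "s\<^sup>2 + 4 * t > 0"
  shows "\<bar>fibp s t n\<bar> * (phi s t - phi' s t) = \<bar>phi s t ^ n - phi' s t ^ n\<bar>"
  using phi_gt_phi'[OF assms] by (simp add: fibp_Binet[OF assms] abs_divide)

lemma abs_fibp_bounds:
  assumes "s\<^sup>2 + 4 * t > 0"
  defines "\<mu> \<equiv> max \<bar>phi s t\<bar> \<bar>phi' s t\<bar>" and "\<nu> \<equiv> min \<bar>phi s t\<bar> \<bar>phi' s t\<bar>"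
  shows "\<mu> ^ n - \<nu> ^ n \<le> \<bar>fibp s t n\<bar> * (phi s t - phi' s t)"
    and "\<bar>fibp s t n\<bar> * (phi s t - phi' s t) \<le> \<mu> ^ n + \<nu> ^ n"
proof -
  have "\<mu> ^ n - \<nu> ^ n = \<bar>\<bar>phi s t\<bar> ^ n - \<bar>phi' s t\<bar> ^ n\<bar>"
    by (auto simp: \<mu>_def \<nu>_def max_def min_def power_mono)
  also have "\<dots> \<le> \<bar>phi s t ^ n - phi' s t ^ n\<bar>"
    by (metis abs_triangle_ineq3 power_abs)
  finally show "\<mu> ^ n - \<nu> ^ n \<le> \<bar>fibp s t n\<bar> * (phi s t - phi' s t)"
    by (simp add: abs_fibp_mult_phi_diff[OF assms(1)])
  have "\<bar>phi s t ^ n - phi' s t ^ n\<bar> \<le> \<bar>phi s t\<bar> ^ n + \<bar>phi' s t\<bar> ^ n"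
    by (metis abs_triangle_ineq4 power_abs)
  also have "\<dots> = \<mu> ^ n + \<nu> ^ n"
    by (simp add: \<mu>_def \<nu>_def max_def min_def)
  finally show "\<bar>fibp s t n\<bar> * (phi s t - phi' s t) \<le> \<mu> ^ n + \<nu> ^ n"
    by (simp add: abs_fibp_mult_phi_diff[OF assms(1)])
qed

lemma fibp_nonzero:
  assumes "s\<^sup>2 + 4 * t > 0" "s \<noteq> 0" "n \<noteq> 0"
  shows "fibp s t n \<noteq> 0"
proof
  assume "fibp s t n = 0"
  then have "\<bar>phi s t\<bar> ^ n = \<bar>phi' s t\<bar> ^ n"
    using abs_fibp_mult_phi_diff[OF assms(1), of n] by (simp flip: power_abs)
  then show False
    using abs_phi_neq_abs_phi'[OF assms(1,2)] assms(3) by (simp add: power_eq_iff_eq_base)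
qed

lemma fibfact_Suc: "fibfact s t (Suc n) = fibfact s t n * fibp s t (Suc n)"
  by (simp add: fibfact_def prod.nat_ivl_Suc')

lemma fibfact_nonzero:
  assumes "s\<^sup>2 + 4 * t > 0" "s \<noteq> 0"
  shows "fibfact s t n \<noteq> 0"
  using fibp_nonzero[OF assms] by (simp add: fibfact_def)

lemma fibp_add:
  assumes "s\<^sup>2 + 4 * t > 0"
  shows "fibp s t (i + j) = phi s t ^ j * fibp s t i + phi' s t ^ i * fibp s t j"
proof -
  have "phi s t ^ (i + j) - phi' s t ^ (i + j)
      = phi s t ^ j * (phi s t ^ i - phi' s t ^ i) + phi' s t ^ i * (phi s t ^ j - phi' s t ^ j)"
    by (simp add: algebra_simps power_add)
  then show ?thesis
    by (simp add: fibp_Binet[OF assms] add_divide_distrib)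
qed

section \<open>Ratio estimates for real sequences\<close>

lemma summable_ratio_test_tendsto:
  fixes a \<sigma> :: "nat \<Rightarrow> real"
  assumes "\<And>n. 0 \<le> a n" "\<And>n. a (Suc n) \<le> \<sigma> n * a n" "\<sigma> \<longlonglongrightarrow> L" "L < 1"
  shows "summable a"
proof -
  define c where "c = (1 + L) / 2"
  have "eventually (\<lambda>n. \<sigma> n < c) sequentially"
    using assms(4) by (intro order_tendstoD(2)[OF assms(3)]) (simp add: c_def)
  then obtain N where N: "\<And>n. n \<ge> N \<Longrightarrow> \<sigma> n < c"
    by (auto simp: eventually_sequentially)
  show ?thesis
  proof (rule summable_ratio_test[of c N])
    show "c < 1" using assms(4) by (simp add: c_def)
    fix n assume "N \<le> n"
    have "a (Suc n) \<le> c * a n"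
      using assms(2)[of n] N[OF \<open>N \<le> n\<close>] assms(1)[of n] by (meson less_imp_le mult_right_mono order_trans)
    then show "norm (a (Suc n)) \<le> c * norm (a n)"
      using assms(1) by simp
  qed
qed

lemma ratio_lower_bound_not_tendsto_zero:
  fixes a :: "nat \<Rightarrow> real"
  assumes "a 0 = 1" "\<And>n. a n \<le> (1 + q ^ Suc n) * a (Suc n)" "0 \<le> q" "q < 1"
  shows "\<not> a \<longlonglongrightarrow> 0"
proof
  assume "a \<longlonglongrightarrow> 0"
  have lower: "exp (- (\<Sum>k<n. q ^ Suc k)) \<le> a n" for n
  proof (induction n)
    case (Suc n)
    define x where "x = q ^ Suc n"
    have "exp (- (\<Sum>k<Suc n. q ^ Suc k)) * (1 + x) = exp (- (\<Sum>k<n. q ^ Suc k)) * (exp (- x) * (1 + x))"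
      by (simp add: x_def exp_diff exp_minus_inverse field_simps)
    also have "\<dots> \<le> exp (- (\<Sum>k<n. q ^ Suc k)) * 1"
      using exp_ge_add_one_self[of x] by (intro mult_left_mono) (simp_all add: exp_minus field_simps)
    also have "\<dots> \<le> (1 + x) * a (Suc n)"
      using Suc.IH assms(2)[of n] by (simp add: x_def)
    finally show ?case
      using assms(3) by (simp add: x_def mult.commute add_pos_nonneg)
  qed (simp add: assms(1))
  define b where "b = (\<Sum>k. q ^ Suc k)"
  have "(\<Sum>k<n. q ^ Suc k) \<le> b" for n
    unfolding b_def using assms(3,4) by (intro sum_le_suminf) auto
  then have "exp (- b) \<le> a n" for n
    using lower[of n] by (meson exp_le_cancel_iff neg_le_iff_le order_trans)
  moreover obtain n where "a n < exp (- b)"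
    using order_tendstoD(2)[OF \<open>a \<longlonglongrightarrow> 0\<close>, of "exp (- b)"] by (auto simp: eventually_sequentially)
  ultimately show False by (meson not_le)
qed

lemma tendsto_mult_power_divide_one_minus_power:
  fixes R \<rho> q :: real
  assumes "0 \<le> \<rho>" "\<rho> \<le> 1" "0 \<le> q" "q < 1"
  shows "(\<lambda>n. R * \<rho> ^ n / (1 - q ^ Suc n)) \<longlonglongrightarrow> (if \<rho> < 1 then 0 else R)"
proof -
  have q: "(\<lambda>n. q ^ Suc n) \<longlonglongrightarrow> 0"
    using assms(3,4) by (intro LIMSEQ_Suc LIMSEQ_power_zero) simp
  show ?thesis
  proof (cases "\<rho> < 1")
    case True
    then have "(\<lambda>n. \<rho> ^ n) \<longlonglongrightarrow> 0"
      using assms(1) by (intro LIMSEQ_power_zero) simp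
    with q have "(\<lambda>n. R * \<rho> ^ n / (1 - q ^ Suc n)) \<longlonglongrightarrow> R * 0 / (1 - 0)"
      by (intro tendsto_divide tendsto_mult tendsto_diff tendsto_const) simp_all
    with True show ?thesis by simp
  next
    case False
    with assms(2) have "\<rho> = 1" by simp
    from q have "(\<lambda>n. R * 1 / (1 - q ^ Suc n)) \<longlonglongrightarrow> R * 1 / (1 - 0)"
      by (intro tendsto_divide tendsto_mult tendsto_diff tendsto_const) simp_all
    with \<open>\<rho> = 1\<close> show ?thesis by simp
  qed
qed

section \<open>Absolute convergence of the (s,t)-exponentials\<close>

definition Exp_coeff :: "real \<Rightarrow> real \<Rightarrow> real \<Rightarrow> nat \<Rightarrow> real" where
  "Exp_coeff s t \<psi> n = \<psi> ^ (n choose 2) / fibfact s t n"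

lemma Exp_term_eq: "Exp_term s t z = (\<lambda>n. of_real (Exp_coeff s t (phi s t) n) * z ^ n)"
  by (simp add: fun_eq_iff Exp_term_def Exp_coeff_def)

lemma Exp'_term_eq: "Exp'_term s t z = (\<lambda>n. of_real (Exp_coeff s t (phi' s t) n) * z ^ n)"
  by (simp add: fun_eq_iff Exp'_term_def Exp_coeff_def)

lemma Exp_coeff_0 [simp]: "Exp_coeff s t \<psi> 0 = 1"
  by (simp add: Exp_coeff_def fibfact_def numeral_2_eq_2)

lemma Exp_coeff_1 [simp]: "Exp_coeff s t \<psi> (Suc 0) = 1"
  by (simp add: Exp_coeff_def fibfact_def numeral_2_eq_2)

lemma Exp_st_eq_powser: "Exp_st s t z = (\<Sum>n. of_real (Exp_coeff s t (phi s t) n) * z ^ n)"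
  by (simp add: Exp_st_def Exp_term_eq)

lemma Exp_st_zero [simp]: "Exp_st s t 0 = 1"
  by (simp add: Exp_st_eq_powser powser_zero)

context
  fixes s t :: real
  assumes disc_pos: "s\<^sup>2 + 4 * t > 0" and s_nonzero: "s \<noteq> 0"
begin

lemma Exp_coeff_Suc: "Exp_coeff s t \<psi> (Suc n) * fibp s t (Suc n) = \<psi> ^ n * Exp_coeff s t \<psi> n"
proof -
  have "Suc n choose 2 = (n choose 2) + n"
    by (simp add: numeral_2_eq_2)
  then show ?thesis
    using fibp_nonzero[OF disc_pos s_nonzero, of "Suc n"] fibfact_nonzero[OF disc_pos s_nonzero, of n]
    by (simp add: Exp_coeff_def fibfact_Suc power_add field_simps)
qed

lemma abs_Exp_coeff_Suc_bounds:
  defines "\<mu> \<equiv> max \<bar>phi s t\<bar> \<bar>phi' s t\<bar>" and "\<nu> \<equiv> min \<bar>phi s t\<bar> \<bar>phi' s t\<bar>"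
  shows "(\<mu> ^ Suc n - \<nu> ^ Suc n) * \<bar>Exp_coeff s t \<psi> (Suc n)\<bar> \<le> (phi s t - phi' s t) * \<bar>\<psi>\<bar> ^ n * \<bar>Exp_coeff s t \<psi> n\<bar>"
    and "(phi s t - phi' s t) * \<bar>\<psi>\<bar> ^ n * \<bar>Exp_coeff s t \<psi> n\<bar> \<le> (\<mu> ^ Suc n + \<nu> ^ Suc n) * \<bar>Exp_coeff s t \<psi> (Suc n)\<bar>"
proof -
  have "\<bar>\<psi>\<bar> ^ n * \<bar>Exp_coeff s t \<psi> n\<bar> = \<bar>Exp_coeff s t \<psi> (Suc n)\<bar> * \<bar>fibp s t (Suc n)\<bar>"
    unfolding abs_mult [symmetric] power_abs [symmetric] Exp_coeff_Suc ..
  then have eq: "(phi s t - phi' s t) * \<bar>\<psi>\<bar> ^ n * \<bar>Exp_coeff s t \<psi> n\<bar>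
      = \<bar>fibp s t (Suc n)\<bar> * (phi s t - phi' s t) * \<bar>Exp_coeff s t \<psi> (Suc n)\<bar>"
    by (simp add: ac_simps)
  show "(\<mu> ^ Suc n - \<nu> ^ Suc n) * \<bar>Exp_coeff s t \<psi> (Suc n)\<bar> \<le> (phi s t - phi' s t) * \<bar>\<psi>\<bar> ^ n * \<bar>Exp_coeff s t \<psi> n\<bar>"
    unfolding eq \<mu>_def \<nu>_def by (rule mult_right_mono[OF abs_fibp_bounds(1)[OF disc_pos]]) simp
  show "(phi s t - phi' s t) * \<bar>\<psi>\<bar> ^ n * \<bar>Exp_coeff s t \<psi> n\<bar> \<le> (\<mu> ^ Suc n + \<nu> ^ Suc n) * \<bar>Exp_coeff s t \<psi> (Suc n)\<bar>"
    unfolding eq \<mu>_def \<nu>_def by (rule mult_right_mono[OF abs_fibp_bounds(2)[OF disc_pos]]) simp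
qed

lemma summable_abs_Exp_coeff:
  defines "\<mu> \<equiv> max \<bar>phi s t\<bar> \<bar>phi' s t\<bar>"
  assumes "\<bar>\<psi>\<bar> \<le> \<mu>" "\<bar>\<psi>\<bar> < \<mu> \<or> r * (phi s t - phi' s t) < \<mu>" "0 \<le> r"
  shows "summable (\<lambda>n. \<bar>Exp_coeff s t \<psi> n\<bar> * r ^ n)"
proof -
  define \<nu> where "\<nu> = min \<bar>phi s t\<bar> \<bar>phi' s t\<bar>"
  define R where "R = r * (phi s t - phi' s t) / \<mu>"
  define q where "q = \<nu> / \<mu>"
  define \<sigma> where "\<sigma> n = R * (\<bar>\<psi>\<bar> / \<mu>) ^ n / (1 - q ^ Suc n)" for n
  have "\<nu> < \<mu>" "\<nu> \<ge> 0"
    using abs_phi_neq_abs_phi'[OF disc_pos s_nonzero] by (auto simp: \<mu>_def \<nu>_def)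
  then have "0 < \<mu>" "0 \<le> q" "q < 1" by (simp_all add: q_def)
  show ?thesis
  proof (rule summable_ratio_test_tendsto[where \<sigma> = \<sigma> and L = "if \<bar>\<psi>\<bar> / \<mu> < 1 then 0 else R"])
    fix n
    show "0 \<le> \<bar>Exp_coeff s t \<psi> n\<bar> * r ^ n" using assms(4) by simp
    define P where "P = \<mu> ^ Suc n - \<nu> ^ Suc n"
    have "q ^ Suc n < 1"
      using \<open>0 \<le> q\<close> \<open>q < 1\<close> power_less_one_iff[of q "Suc n"] by simp
    moreover have "P = \<mu> ^ Suc n * (1 - q ^ Suc n)"
      using \<open>0 < \<mu>\<close> by (simp add: P_def q_def power_divide right_diff_distrib)
    ultimately have "0 < P" "r * (phi s t - phi' s t) * \<bar>\<psi>\<bar> ^ n = P * \<sigma> n"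
      using \<open>0 < \<mu>\<close> by (simp_all add: \<sigma>_def R_def power_divide)
    have "P * (\<bar>Exp_coeff s t \<psi> (Suc n)\<bar> * r ^ Suc n) = (P * \<bar>Exp_coeff s t \<psi> (Suc n)\<bar>) * r ^ Suc n"
      by (simp only: mult.assoc)
    also have "\<dots> \<le> ((phi s t - phi' s t) * \<bar>\<psi>\<bar> ^ n * \<bar>Exp_coeff s t \<psi> n\<bar>) * r ^ Suc n"
      using abs_Exp_coeff_Suc_bounds(1)[of n \<psi>] assms(4)
      unfolding P_def \<mu>_def \<nu>_def by (intro mult_right_mono) simp_all
    also have "\<dots> = r * (phi s t - phi' s t) * \<bar>\<psi>\<bar> ^ n * (\<bar>Exp_coeff s t \<psi> n\<bar> * r ^ n)"
      by (simp add: algebra_simps)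
    finally have "P * (\<bar>Exp_coeff s t \<psi> (Suc n)\<bar> * r ^ Suc n) \<le> P * \<sigma> n * (\<bar>Exp_coeff s t \<psi> n\<bar> * r ^ n)"
      unfolding \<open>r * (phi s t - phi' s t) * \<bar>\<psi>\<bar> ^ n = P * \<sigma> n\<close> .
    with \<open>0 < P\<close> show "\<bar>Exp_coeff s t \<psi> (Suc n)\<bar> * r ^ Suc n \<le> \<sigma> n * (\<bar>Exp_coeff s t \<psi> n\<bar> * r ^ n)"
      by (simp add: mult.assoc)
  next
    show "\<sigma> \<longlonglongrightarrow> (if \<bar>\<psi>\<bar> / \<mu> < 1 then 0 else R)"
      unfolding \<sigma>_def using assms(2) \<open>0 < \<mu>\<close> \<open>0 \<le> q\<close> \<open>q < 1\<close>
      by (intro tendsto_mult_power_divide_one_minus_power) simp_all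
  next
    show "(if \<bar>\<psi>\<bar> / \<mu> < 1 then 0 else R) < 1"
      using assms(3) \<open>0 < \<mu>\<close> by (auto simp: R_def)
  qed
qed

lemma abs_Exp_coeff_not_tendsto_zero:
  defines "\<mu> \<equiv> max \<bar>phi s t\<bar> \<bar>phi' s t\<bar>"
  assumes "\<bar>\<psi>\<bar> = \<mu>" "\<mu> \<le> r * (phi s t - phi' s t)"
  shows "\<not> (\<lambda>n. \<bar>Exp_coeff s t \<psi> n\<bar> * r ^ n) \<longlonglongrightarrow> 0"
proof (rule ratio_lower_bound_not_tendsto_zero)
  define \<nu> where "\<nu> = min \<bar>phi s t\<bar> \<bar>phi' s t\<bar>"
  have "\<nu> < \<mu>" "\<nu> \<ge> 0"
    using abs_phi_neq_abs_phi'[OF disc_pos s_nonzero] by (auto simp: \<mu>_def \<nu>_def)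
  then show "0 \<le> \<nu> / \<mu>" "\<nu> / \<mu> < 1" by simp_all
  have "0 < r * (phi s t - phi' s t)"
    using assms(3) \<open>\<nu> < \<mu>\<close> \<open>\<nu> \<ge> 0\<close> by simp
  with phi_gt_phi'[OF disc_pos] have "0 \<le> r"
    by (simp add: zero_less_mult_iff)
  fix n
  have "\<mu> ^ Suc n * (\<bar>Exp_coeff s t \<psi> n\<bar> * r ^ n) \<le> r * (phi s t - phi' s t) * \<mu> ^ n * (\<bar>Exp_coeff s t \<psi> n\<bar> * r ^ n)"
    using assms(3) \<open>\<nu> < \<mu>\<close> \<open>\<nu> \<ge> 0\<close> \<open>0 \<le> r\<close> by (intro mult_right_mono) simp_all
  also have "\<dots> = ((phi s t - phi' s t) * \<bar>\<psi>\<bar> ^ n * \<bar>Exp_coeff s t \<psi> n\<bar>) * r ^ Suc n"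
    by (simp add: assms(2) algebra_simps)
  also have "\<dots> \<le> ((\<mu> ^ Suc n + \<nu> ^ Suc n) * \<bar>Exp_coeff s t \<psi> (Suc n)\<bar>) * r ^ Suc n"
    using abs_Exp_coeff_Suc_bounds(2)[of \<psi> n] \<open>0 \<le> r\<close>
    unfolding \<mu>_def \<nu>_def by (intro mult_right_mono) simp_all
  also have "\<dots> = \<mu> ^ Suc n * ((1 + (\<nu> / \<mu>) ^ Suc n) * (\<bar>Exp_coeff s t \<psi> (Suc n)\<bar> * r ^ Suc n))"
    using \<open>\<nu> < \<mu>\<close> \<open>\<nu> \<ge> 0\<close> by (simp add: power_divide field_simps)
  finally show "\<bar>Exp_coeff s t \<psi> n\<bar> * r ^ n \<le> (1 + (\<nu> / \<mu>) ^ Suc n) * (\<bar>Exp_coeff s t \<psi> (Suc n)\<bar> * r ^ Suc n)"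
    using \<open>\<nu> < \<mu>\<close> \<open>\<nu> \<ge> 0\<close> by simp
qed simp

lemma summable_norm_Exp_coeff_powser:
  fixes z :: "'a :: {real_normed_div_algebra, banach}"
  assumes "\<bar>\<psi>\<bar> \<le> max \<bar>phi s t\<bar> \<bar>phi' s t\<bar>"
    and "summable (\<lambda>n. of_real (Exp_coeff s t \<psi> n) * z ^ n)"
  shows "summable (\<lambda>n. norm (of_real (Exp_coeff s t \<psi> n) * z ^ n))"
proof (cases "\<bar>\<psi>\<bar> < max \<bar>phi s t\<bar> \<bar>phi' s t\<bar> \<or> norm z * (phi s t - phi' s t) < max \<bar>phi s t\<bar> \<bar>phi' s t\<bar>")
  case True
  then show ?thesis
    using summable_abs_Exp_coeff[OF assms(1) True] by (simp add: norm_mult norm_power)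
next
  case False
  then have "\<bar>\<psi>\<bar> = max \<bar>phi s t\<bar> \<bar>phi' s t\<bar>" "max \<bar>phi s t\<bar> \<bar>phi' s t\<bar> \<le> norm z * (phi s t - phi' s t)"
    using assms(1) by auto
  then have "\<not> (\<lambda>n. norm (of_real (Exp_coeff s t \<psi> n) * z ^ n)) \<longlonglongrightarrow> 0"
    using abs_Exp_coeff_not_tendsto_zero[of \<psi> "norm z"] by (simp add: norm_mult norm_power)
  moreover have "(\<lambda>n. norm (of_real (Exp_coeff s t \<psi> n) * z ^ n)) \<longlonglongrightarrow> 0"
    using summable_LIMSEQ_zero[OF assms(2)] by (rule tendsto_norm_zero)
  ultimately show ?thesis by contradiction
qed

lemma summable_norm_Exp_term: "summable (Exp_term s t z) \<Longrightarrow> summable (\<lambda>n. norm (Exp_term s t z n))"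
  unfolding Exp_term_eq by (rule summable_norm_Exp_coeff_powser) simp

lemma summable_norm_Exp'_term: "summable (Exp'_term s t z) \<Longrightarrow> summable (\<lambda>n. norm (Exp'_term s t z n))"
  unfolding Exp'_term_eq by (rule summable_norm_Exp_coeff_powser) simp

lemma Exp_st_has_field_derivative_zero: "(Exp_st s t has_field_derivative 1) (at 0)"
proof -
  define \<mu> where "\<mu> = max \<bar>phi s t\<bar> \<bar>phi' s t\<bar>"
  define r where "r = \<mu> / (2 * (phi s t - phi' s t))"
  have "0 < \<mu>"
    using abs_phi_neq_abs_phi'[OF disc_pos s_nonzero] by (auto simp: \<mu>_def)
  moreover have "0 < phi s t - phi' s t"
    using phi_gt_phi'[OF disc_pos] by simp
  ultimately have "0 < r" "r * (phi s t - phi' s t) < \<mu>"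
    by (simp_all add: r_def field_simps)
  then have "summable (\<lambda>n. \<bar>Exp_coeff s t (phi s t) n\<bar> * r ^ n)"
    by (intro summable_abs_Exp_coeff) (simp_all add: \<mu>_def)
  then have "summable (\<lambda>n. norm (of_real (Exp_coeff s t (phi s t) n) * (of_real r :: complex) ^ n))"
    using \<open>0 < r\<close> by (simp add: norm_mult norm_power)
  then have "summable (\<lambda>n. of_real (Exp_coeff s t (phi s t) n) * (of_real r :: complex) ^ n)"
    by (rule summable_norm_cancel)
  from termdiffs_strong[OF this, of 0]
  have "((\<lambda>z::complex. \<Sum>n. of_real (Exp_coeff s t (phi s t) n) * z ^ n) has_field_derivative
      (\<Sum>n. diffs (\<lambda>n. of_real (Exp_coeff s t (phi s t) n)) n * 0 ^ n)) (at 0)"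
    using \<open>0 < r\<close> by simp
  then show ?thesis
    by (simp add: Exp_st_eq_powser [abs_def] powser_zero diffs_def)
qed

section \<open>The product of Exp and Exp'\<close>

definition Exp_mult_Exp'_neg_coeff :: "nat \<Rightarrow> real" where
  "Exp_mult_Exp'_neg_coeff n =
     (\<Sum>i\<le>n. Exp_coeff s t (phi s t) i * ((- 1) ^ (n - i) * Exp_coeff s t (phi' s t) (n - i)))"

lemma Exp_mult_Exp'_neg_coeff_Suc:
  "Exp_mult_Exp'_neg_coeff (Suc n) * fibp s t (Suc n)
     = (phi s t ^ n - phi' s t ^ n) * Exp_mult_Exp'_neg_coeff n"
proof -
  define p p' where "p = phi s t" and "p' = phi' s t"
  define A B where "A = Exp_coeff s t p" and "B j = (- 1) ^ j * Exp_coeff s t p' j" for j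
  have conv: "Exp_mult_Exp'_neg_coeff m = (\<Sum>i\<le>m. A i * B (m - i))" for m
    by (simp add: Exp_mult_Exp'_neg_coeff_def A_def B_def p_def p'_def)
  have A_Suc: "A (Suc i) * fibp s t (Suc i) = p ^ i * A i" for i
    by (simp add: A_def Exp_coeff_Suc)
  have B_Suc: "B (Suc j) * fibp s t (Suc j) = - (p' ^ j * B j)" for j
    using Exp_coeff_Suc[of p' j] by (simp add: B_def)
  have "(\<Sum>i\<le>Suc n. A i * B (Suc n - i)) * fibp s t (Suc n)
      = (\<Sum>i\<le>Suc n. (A i * fibp s t i) * (p ^ (Suc n - i) * B (Suc n - i)))
        + (\<Sum>i\<le>Suc n. A i * p' ^ i * (B (Suc n - i) * fibp s t (Suc n - i)))"
    unfolding sum_distrib_right sum.distrib [symmetric]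
  proof (rule sum.cong)
    fix i assume "i \<in> {..Suc n}"
    then have "fibp s t (Suc n) = p ^ (Suc n - i) * fibp s t i + p' ^ i * fibp s t (Suc n - i)"
      using fibp_add[OF disc_pos, of i "Suc n - i"] by (simp add: p_def p'_def)
    then show "A i * B (Suc n - i) * fibp s t (Suc n)
        = A i * fibp s t i * (p ^ (Suc n - i) * B (Suc n - i)) + A i * p' ^ i * (B (Suc n - i) * fibp s t (Suc n - i))"
      by (simp add: algebra_simps)
  qed simp
  also have "(\<Sum>i\<le>Suc n. (A i * fibp s t i) * (p ^ (Suc n - i) * B (Suc n - i))) = (\<Sum>i\<le>n. p ^ n * (A i * B (n - i)))"
    unfolding sum.atMost_Suc_shift
    by (auto intro!: sum.cong simp: A_Suc power_add [symmetric])
  also have "(\<Sum>i\<le>Suc n. A i * p' ^ i * (B (Suc n - i) * fibp s t (Suc n - i))) = (\<Sum>i\<le>n. - (p' ^ n * (A i * B (n - i))))"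
    unfolding sum.atMost_Suc
    by (auto intro!: sum.cong simp: Suc_diff_le B_Suc power_add [symmetric])
  also have "(\<Sum>i\<le>n. p ^ n * (A i * B (n - i))) + (\<Sum>i\<le>n. - (p' ^ n * (A i * B (n - i))))
      = (p ^ n - p' ^ n) * (\<Sum>i\<le>n. A i * B (n - i))"
    by (simp only: sum_distrib_left [symmetric] sum_negf) (simp add: algebra_simps)
  finally show ?thesis
    by (simp only: conv p_def p'_def)
qed

lemma Exp_mult_Exp'_neg_coeff_eq: "Exp_mult_Exp'_neg_coeff n = (if n = 0 then 1 else 0)"
proof (induction n)
  case 0
  then show ?case by (simp add: Exp_mult_Exp'_neg_coeff_def)
next
  case (Suc n)
  have "(phi s t ^ n - phi' s t ^ n) * Exp_mult_Exp'_neg_coeff n = 0"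
    using Suc.IH by (cases n) simp_all
  then have "Exp_mult_Exp'_neg_coeff (Suc n) * fibp s t (Suc n) = 0"
    by (simp only: Exp_mult_Exp'_neg_coeff_Suc)
  then show ?case
    using fibp_nonzero[OF disc_pos s_nonzero, of "Suc n"] by simp
qed

lemma Exp_st_mult_Exp'_st_neg:
  assumes "summable (Exp_term s t z)" "summable (Exp'_term s t (- z))"
  shows "Exp_st s t z * Exp'_st s t (- z) = 1"
proof -
  have "Exp_st s t z * Exp'_st s t (- z) = (\<Sum>k. \<Sum>i\<le>k. Exp_term s t z i * Exp'_term s t (- z) (k - i))"
    unfolding Exp_st_def Exp'_st_def
    by (rule Cauchy_product[OF summable_norm_Exp_term[OF assms(1)] summable_norm_Exp'_term[OF assms(2)]])
  also have "\<dots> = (\<Sum>k. of_real (Exp_mult_Exp'_neg_coeff k) * z ^ k)"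
  proof (rule suminf_cong)
    fix k
    have "Exp_term s t z i * Exp'_term s t (- z) (k - i)
        = of_real (Exp_coeff s t (phi s t) i * ((- 1) ^ (k - i) * Exp_coeff s t (phi' s t) (k - i))) * z ^ k"
      if "i \<le> k" for i
    proof -
      have "Exp_term s t z i * Exp'_term s t (- z) (k - i)
          = of_real (Exp_coeff s t (phi s t) i * ((- 1) ^ (k - i) * Exp_coeff s t (phi' s t) (k - i))) * (z ^ i * z ^ (k - i))"
        by (simp add: Exp_term_eq Exp'_term_eq power_minus[of z "k - i"])
      also have "z ^ i * z ^ (k - i) = z ^ k"
        using that by (simp flip: power_add)
      finally show ?thesis .
    qed
    then have "(\<Sum>i\<le>k. Exp_term s t z i * Exp'_term s t (- z) (k - i))
        = (\<Sum>i\<le>k. of_real (Exp_coeff s t (phi s t) i * ((- 1) ^ (k - i) * Exp_coeff s t (phi' s t) (k - i))) * z ^ k)"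
      by (intro sum.cong) simp_all
    then show "(\<Sum>i\<le>k. Exp_term s t z i * Exp'_term s t (- z) (k - i)) = of_real (Exp_mult_Exp'_neg_coeff k) * z ^ k"
      by (simp only: Exp_mult_Exp'_neg_coeff_def of_real_sum sum_distrib_right)
  qed
  also have "\<dots> = (\<Sum>k\<in>{0}. of_real (Exp_mult_Exp'_neg_coeff k) * z ^ k)"
    by (rule suminf_finite) (simp_all add: Exp_mult_Exp'_neg_coeff_eq)
  also have "\<dots> = 1"
    by (simp add: Exp_mult_Exp'_neg_coeff_eq)
  finally show ?thesis .
qed

section \<open>Solutions of the (s,t)-difference equation\<close>

lemma Exp_st_dilation_diff:
  fixes z :: complex
  defines "z1 \<equiv> of_real (phi s t) * z" and "z2 \<equiv> of_real (phi' s t) * z"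
  assumes "summable (Exp_term s t z1)" "summable (Exp_term s t z2)"
  shows "Exp_st s t z1 - Exp_st s t z2 = of_real (phi s t - phi' s t) * z * Exp_st s t z1"
proof -
  define c where "c = Exp_coeff s t (phi s t)"
  have c_Suc: "c (Suc n) * (phi s t ^ Suc n - phi' s t ^ Suc n) = (phi s t - phi' s t) * (phi s t ^ n * c n)" for n
    using Exp_coeff_Suc[of "phi s t" n] phi_gt_phi'[OF disc_pos]
    by (simp add: c_def fibp_Binet[OF disc_pos] field_simps)
  have shift: "Exp_term s t z1 (Suc n) - Exp_term s t z2 (Suc n) = of_real (phi s t - phi' s t) * z * Exp_term s t z1 n" for n
  proof -
    have "Exp_term s t z1 (Suc n) - Exp_term s t z2 (Suc n)
        = of_real (c (Suc n) * (phi s t ^ Suc n - phi' s t ^ Suc n)) * z ^ Suc n"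
      by (simp add: Exp_term_eq z1_def z2_def c_def power_mult_distrib algebra_simps)
    also have "\<dots> = of_real (phi s t - phi' s t) * z * Exp_term s t z1 n"
      by (simp only: c_Suc) (simp add: Exp_term_eq z1_def c_def power_mult_distrib)
    finally show ?thesis .
  qed
  have "(\<lambda>n. Exp_term s t z1 n - Exp_term s t z2 n) sums (Exp_st s t z1 - Exp_st s t z2)"
    unfolding Exp_st_def using assms(3,4) by (intro sums_diff summable_sums)
  moreover have "(\<lambda>n. Exp_term s t z1 n - Exp_term s t z2 n) sums (of_real (phi s t - phi' s t) * z * Exp_st s t z1)"
  proof -
    have "(\<lambda>n. of_real (phi s t - phi' s t) * z * Exp_term s t z1 n) sums (of_real (phi s t - phi' s t) * z * Exp_st s t z1)"
      unfolding Exp_st_def using assms(3) by (intro sums_mult summable_sums)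
    then have "(\<lambda>n. Exp_term s t z1 (Suc n) - Exp_term s t z2 (Suc n)) sums (of_real (phi s t - phi' s t) * z * Exp_st s t z1)"
      by (simp only: shift)
    then show ?thesis
      unfolding sums_Suc_iff [where f = "\<lambda>n. Exp_term s t z1 n - Exp_term s t z2 n"]
      by (simp add: Exp_term_eq)
  qed
  ultimately show ?thesis
    by (rule sums_unique2)
qed

lemma solves_at_Exp_st:
  assumes "x = 0 \<or> summable (Exp_term s t (a * of_real (phi s t * x)))
                  \<and> summable (Exp_term s t (a * of_real (phi' s t * x)))"
  shows "solves_at s t a (\<lambda>x. Exp_st s t (a * of_real x)) x"
proof (cases "x = 0")
  case True
  have "(Exp_st s t has_field_derivative 1) (at (a * of_real 0))"
    using Exp_st_has_field_derivative_zero by simp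
  from DERIV_chain2[OF this DERIV_cmult_Id]
  have "((\<lambda>x. Exp_st s t (a * of_real x)) has_vector_derivative a) (at 0)"
    by (intro has_vector_derivative_real_field) simp
  then show ?thesis
    using True by (auto simp: solves_at_def stD_def vector_derivative_at intro: differentiableI_vector)
next
  case False
  define z where "z = a * of_real x"
  have "of_real (phi s t) * z = a * of_real (phi s t * x)" "of_real (phi' s t) * z = a * of_real (phi' s t * x)"
    by (simp_all add: z_def)
  note dilation = Exp_st_dilation_diff[of z, unfolded this]
  have "Exp_st s t (a * of_real (phi s t * x)) - Exp_st s t (a * of_real (phi' s t * x))
      = of_real (phi s t - phi' s t) * z * Exp_st s t (a * of_real (phi s t * x))"
    using assms False by (intro dilation) auto
  moreover have "phi s t - phi' s t \<noteq> 0"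
    using phi_gt_phi'[OF disc_pos] by simp
  ultimately show ?thesis
    using False by (simp add: solves_at_def stD_def z_def)
qed

end

lemma solves_at_mult_left:
  assumes "solves_at s t a f x"
  shows "solves_at s t a (\<lambda>y. c * f y) x"
proof (cases "x = 0")
  case True
  then have "(f has_vector_derivative vector_derivative f (at 0)) (at 0)"
    using assms by (simp add: solves_at_def vector_derivative_works [symmetric])
  then have "((\<lambda>y. c * f y) has_vector_derivative c * vector_derivative f (at 0)) (at 0)"
    by (rule has_vector_derivative_mult_right)
  then show ?thesis
    using assms True
    by (auto simp: solves_at_def stD_def vector_derivative_at intro: differentiableI_vector)
next
  case False
  then have "stD s t (\<lambda>y. c * f y) x = c * stD s t f x"
    by (simp add: stD_def right_diff_distrib [symmetric])
  then show ?thesis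
    using assms False by (simp add: solves_at_def)
qed

lemma solves_at_mult_right:
  assumes "solves_at s t a f x"
  shows "solves_at s t a (\<lambda>y. f y * c) x"
  using solves_at_mult_left[OF assms, of c] by (simp add: mult.commute)

lemma solves_at_mult_periodic:
  assumes "phi s t \<noteq> 0" "x \<noteq> 0" "\<And>y. y \<noteq> 0 \<Longrightarrow> p (phi' s t / phi s t * y) = p y"
    and "solves_at s t a f x"
  shows "solves_at s t a (\<lambda>y. p y * f y) x"
proof -
  have "p (phi' s t * x) = p (phi s t * x)"
    using assms(3)[of "phi s t * x"] assms(1,2) by simp
  then have "stD s t (\<lambda>y. p y * f y) x = p (phi s t * x) * stD s t f x"
    using assms(2) by (simp add: stD_def right_diff_distrib [symmetric])
  then show ?thesis
    using assms(2,4) by (simp add: solves_at_def)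
qed

theorem mainTheorem12:
  fixes s t :: real and a \<xi> :: complex
  assumes "s \<noteq> 0" and "t \<noteq> 0" and "s\<^sup>2 + 4 * t > 0"
  shows
   "((\<lambda>x. \<xi> * Exp_st s t (a * of_real x)) 0 = \<xi> \<and>
     (\<forall>x. (x = 0 \<or> (summable (Exp_term s t (a * of_real (phi s t * x))) \<and>
                      summable (Exp_term s t (a * of_real (phi' s t * x)))))
          \<longrightarrow> solves_at s t a (\<lambda>x. \<xi> * Exp_st s t (a * of_real x)) x))
    \<and>
    (\<forall>\<eta>::real. summable (Exp_term s t (a * of_real \<eta>)) \<and> summable (Exp'_term s t (- a * of_real \<eta>))
       \<longrightarrow> (let f = (\<lambda>x. \<xi> * Exp_st s t (a * of_real x) * Exp'_st s t (- a * of_real \<eta>)) in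
             f \<eta> = \<xi> \<and>
             (\<forall>x. (x = 0 \<or> (summable (Exp_term s t (a * of_real (phi s t * x))) \<and>
                             summable (Exp_term s t (a * of_real (phi' s t * x)))))
                 \<longrightarrow> solves_at s t a f x)))
    \<and>
    (\<forall>(\<eta>::real) (p::real \<Rightarrow> complex).
       \<eta> > 0 \<and> summable (Exp_term s t (a * of_real \<eta>)) \<and> summable (Exp'_term s t (- a * of_real \<eta>))
       \<and> (\<forall>y. y \<noteq> 0 \<longrightarrow> p ((phi' s t / phi s t) * y) = p y)
       \<longrightarrow> (let f = (\<lambda>x. Exp_st s t (a * of_real x) * Exp'_st s t (- a * of_real \<eta>));
                g = (\<lambda>x. p x * f x) in
             g \<eta> = p \<eta> \<and>
             (\<forall>x. x \<noteq> 0 \<and> summable (Exp_term s t (a * of_real (phi s t * x))) \<and>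
                         summable (Exp_term s t (a * of_real (phi' s t * x)))
                 \<longrightarrow> solves_at s t a g x)))"
proof -
  have E: "solves_at s t a (\<lambda>x. Exp_st s t (a * of_real x)) x"
    if "x = 0 \<or> summable (Exp_term s t (a * of_real (phi s t * x)))
                 \<and> summable (Exp_term s t (a * of_real (phi' s t * x)))" for x
    using solves_at_Exp_st[OF assms(3,1) that] .
  have inv: "Exp_st s t (a * of_real \<eta>) * Exp'_st s t (- a * of_real \<eta>) = 1"
    if "summable (Exp_term s t (a * of_real \<eta>))" "summable (Exp'_term s t (- a * of_real \<eta>))" for \<eta>
    using Exp_st_mult_Exp'_st_neg[OF assms(3,1) that(1)] that(2) by simp
  have "phi s t \<noteq> 0"
    using phi_nonzero assms(2,3) by simp
  show ?thesis
    unfolding Let_def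
    using E inv
    by (auto simp: mult.assoc
        intro!: solves_at_mult_left solves_at_mult_right solves_at_mult_periodic[OF \<open>phi s t \<noteq> 0\<close>])
qed

end
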